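(* Fix parameters $0<\varepsilon<f<(1+\varepsilon)/2<1$ and $\sigma>0$. Let $pqr$ be a non-degenerate triangle in $\mathbb{R}^2$ with one of its vertices designated as apex and an ordering of the two other (base) vertices, and let $\tau(p),\tau(q),\tau(r)$ be real values with $\tau(p)\le\tau(q)\le\tau(r)$ such that $\|\nabla\tau\|<\sigma$ and the triangle satisfies the adaptive progress constraint $\sigma$. Let $d_p:=\operatorname{dist}(p,\operatorname{aff}(qr))$. Then for every $\delta\in[0,\varepsilon\,\sigma\,d_p]$, the affine function $\tau'$ with $\tau'(p)=\tau(p)+\delta$, $\tau'(q)=\tau(q)$, $\tau'(r)=\tau(r)$ satisfies $\|\nabla\tau'\|<\sigma$.
   Context: Values at the vertices of a triangle are extended to the unique affine function on $\mathbb{R}^2$, also denoted $\tau$; $\nabla\tau$ is its gradient. Diminished width: for a triangle written $abc$ with its apex listed first (here $a$), $\mathrm{dw}(abc):=\min\{(1-\varepsilon)\operatorname{dist}(a,\operatorname{aff}(bc)),\,(1-f)\operatorname{dist}(b,\operatorname{aff}(ac)),\,(1-f)\operatorname{dist}(c,\operatorname{aff}(ab))\}$ (symmetric in $b,c$). Adaptive progress constraint $\sigma$: for a triangle with apex $a$ and base vertices $b,c$ (in the given order), let $d$ be the midpoint of $bc$ and $e$ the midpoint of $ac$, with $\tau(d),\tau(e)$ the values of the affine function there; the triangle satisfies the constraint iff $|\tau(a)-\tau(b)|\le 2\,\mathrm{dw}(dca)\,\sigma$, $|\tau(a)-\tau(d)|\le\mathrm{dw}(abc)\,\sigma$, $|\tau(a)-\tau(c)|\le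 2\,\mathrm{dw}(dab)\,\sigma$, and $|\tau(b)-\tau(c)|\le 4\,\mathrm{dw}(ead)\,\sigma$ (in each $\mathrm{dw}$ the first-listed vertex is the apex of that smaller triangle). *)

theory Defs
  imports "HOL-Analysis.Analysis"
begin

definition tri_grad :: "real^2 \<Rightarrow> real^2 \<Rightarrow> real^2 \<Rightarrow> real \<Rightarrow> real \<Rightarrow> real \<Rightarrow> real^2" where
  "tri_grad a b c ta tb tc =
     (THE g. \<exists>k. g \<bullet> a + k = ta \<and> g \<bullet> b + k = tb \<and> g \<bullet> c + k = tc)"

definition tri_aff :: "real^2 \<Rightarrow> real^2 \<Rightarrow> real^2 \<Rightarrow> real \<Rightarrow> real \<Rightarrow> real \<Rightarrow> real^2 \<Rightarrow> real" where
  "tri_aff a b c ta tb tc x =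
     (let g = tri_grad a b c ta tb tc in g \<bullet> x + (ta - g \<bullet> a))"

definition dw :: "real \<Rightarrow> real \<Rightarrow> real^2 \<Rightarrow> real^2 \<Rightarrow> real^2 \<Rightarrow> real" where
  "dw eps f a b c =
     min ((1 - eps) * infdist a (affine hull {b, c}))
       (min ((1 - f) * infdist b (affine hull {a, c}))
            ((1 - f) * infdist c (affine hull {a, b})))"

definition adaptive_progress ::
  "real \<Rightarrow> real \<Rightarrow> real \<Rightarrow> real^2 \<Rightarrow> real^2 \<Rightarrow> real^2 \<Rightarrow> (real^2 \<Rightarrow> real) \<Rightarrow> bool" where
  "adaptive_progress eps f \<sigma> a b c T =
     (let d = midpoint b c; e = midpoint a c in
        \<bar>T a - T b\<bar> \<le> 2 * dw eps f d c a * \<sigma> \<and>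
        \<bar>T a - T d\<bar> \<le> dw eps f a b c * \<sigma> \<and>
        \<bar>T a - T c\<bar> \<le> 2 * dw eps f d a b * \<sigma> \<and>
        \<bar>T b - T c\<bar> \<le> 4 * dw eps f e a d * \<sigma>)"

end

theory Submission
  imports Defs
begin

(* The gradient of the affine interpolant is computed explicitly by Cramer's
   rule (cramer_grad); as a function of the apex value it is affine, equal to
   V + (t - tq) G where G is the gradient of the hat function at p.  Two values
   of t give a gradient of norm < sigma: the original apex value (hypothesis)
   and tq + eps sigma dist(p, qr), where |G| = 1/dist(p, qr) contributes
   eps sigma and V contributes at most (1 - eps) sigma, provided the
   difference along the base is small enough (apex_raise).  By convexity of
   the norm ball the raised value in between is fine as well.  The required
   smallness of the base difference comes from the adaptive progress
   constraint: its first and third inequalities bound the edges at the apex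
   (progress_edge_bounds), and since p carries the lowest value one of them
   dominates the difference along the base seen from p
   (lowest_vertex_edge_bound). *)

definition cross2 :: "real^2 \<Rightarrow> real^2 \<Rightarrow> real" where
  "cross2 x y = x$1 * y$2 - x$2 * y$1"

definition rot :: "real^2 \<Rightarrow> real^2" where
  "rot x = vector [- x$2, x$1]"

definition area2 :: "real^2 \<Rightarrow> real^2 \<Rightarrow> real^2 \<Rightarrow> real" where
  "area2 p q r = cross2 (q - p) (r - p)"

lemma inner_real2: "(x::real^2) \<bullet> y = x$1 * y$1 + x$2 * y$2"
  by (simp add: inner_vec_def sum_2)

lemma rot_components [simp]: "rot x $ 1 = - x$2" "rot x $ 2 = x$1"
  by (simp_all add: rot_def)

lemma norm_rot [simp]: "norm (rot x) = norm x"
  by (simp add: norm_eq_sqrt_inner inner_real2 algebra_simps)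

lemma rot_inner: "rot x \<bullet> y = cross2 x y"
  by (simp add: inner_real2 cross2_def)

lemma cross2_self [simp]: "cross2 x x = 0"
  by (simp add: cross2_def)

lemma cross2_zero [simp]: "cross2 0 x = 0" "cross2 x 0 = 0"
  by (simp_all add: cross2_def)

lemma cross2_commute: "cross2 y x = - cross2 x y"
  by (simp add: cross2_def)

lemma cross2_scaleR: "cross2 (a *\<^sub>R x) (b *\<^sub>R y) = a * b * cross2 x y"
  by (simp add: cross2_def algebra_simps)

lemma cross2_rot: "cross2 (rot x) (rot y) = cross2 x y"
  by (simp add: cross2_def)

(* Cramer's rule: a vector is determined by its inner products with two
   independent vectors u, v. *)
lemma cramer2: "cross2 u v *\<^sub>R g = (g \<bullet> v) *\<^sub>R rot u - (g \<bullet> u) *\<^sub>R rot v"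
  by (simp add: vec_eq_iff forall_2 cross2_def inner_real2 algebra_simps)

lemma orth_decomp2: "(norm u)\<^sup>2 *\<^sub>R v = (v \<bullet> u) *\<^sub>R u + cross2 u v *\<^sub>R rot u"
  by (simp add: vec_eq_iff forall_2 cross2_def inner_real2 power2_norm_eq_inner algebra_simps)

lemma norm_add_strict:
  assumes "cross2 x y \<noteq> 0"
  shows "norm (x + y) < norm x + norm y"
proof -
  have "norm x *\<^sub>R y \<noteq> norm y *\<^sub>R x"
  proof
    assume "norm x *\<^sub>R y = norm y *\<^sub>R x"
    then have "cross2 x (norm x *\<^sub>R y) = cross2 x (norm y *\<^sub>R x)" by simp
    then have "norm x * cross2 x y = 0"
      using cross2_scaleR[of 1 x "norm x" y] cross2_scaleR[of 1 x "norm y" x] by simp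
    moreover have "x \<noteq> 0" using assms by (auto simp: cross2_def)
    ultimately show False using assms by simp
  qed
  then show ?thesis using norm_triangle_eq[of x y] norm_triangle_ineq[of x y] by linarith
qed

lemma area2_perms:
  "area2 p r q = - area2 p q r" "area2 q p r = - area2 p q r" "area2 q r p = area2 p q r"
  "area2 r p q = area2 p q r" "area2 r q p = - area2 p q r"
  by (simp_all add: area2_def cross2_def algebra_simps)

lemma area2_midpoint:
  "area2 (midpoint b c) c a = area2 a b c / 2" "area2 (midpoint b c) a b = area2 a b c / 2"
  by (simp_all add: area2_def cross2_def midpoint_def algebra_simps)

lemma area2_neq_0:
  assumes "\<not> collinear {p, q, r}"
  shows "area2 p q r \<noteq> 0"
proof
  assume "area2 p q r = 0"
  then have decomp: "(norm (q - p))\<^sup>2 *\<^sub>R (r - p) = ((r - p) \<bullet> (q - p)) *\<^sub>R (q - p)"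
    using orth_decomp2[of "q - p" "r - p"] by (simp add: area2_def)
  have "\<exists>c. r - p = c *\<^sub>R (q - p)" if "q \<noteq> p"
  proof
    have "(norm (q - p))\<^sup>2 \<noteq> 0" using that by simp
    then show "r - p = (((r - p) \<bullet> (q - p)) / (norm (q - p))\<^sup>2) *\<^sub>R (q - p)"
      using arg_cong[OF decomp, of "scaleR (1 / (norm (q - p))\<^sup>2)"] by simp
  qed
  then have "collinear {0, q - p, r - p}"
    by (cases "q = p") (auto simp: collinear_lemma)
  then show False
    using assms collinear_3[of q p r] by (simp add: insert_commute)
qed

definition cramer_grad :: "real^2 \<Rightarrow> real^2 \<Rightarrow> real^2 \<Rightarrow> real \<Rightarrow> real \<Rightarrow> real \<Rightarrow> real^2" where
  "cramer_grad p q r tp tq tr =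
     (1 / area2 p q r) *\<^sub>R ((tr - tp) *\<^sub>R rot (q - p) - (tq - tp) *\<^sub>R rot (r - p))"

lemma cramer_grad_inner:
  assumes "area2 p q r \<noteq> 0"
  shows "cramer_grad p q r tp tq tr \<bullet> (q - p) = tq - tp"
    and "cramer_grad p q r tp tq tr \<bullet> (r - p) = tr - tp"
  using assms
  by (simp_all add: cramer_grad_def inner_diff_left rot_inner area2_def cross2_commute[of "r - p"])

lemma tri_grad_eq_cramer:
  assumes D: "area2 p q r \<noteq> 0"
  shows "tri_grad p q r tp tq tr = cramer_grad p q r tp tq tr"
  unfolding tri_grad_def
proof (rule the_equality)
  let ?g = "cramer_grad p q r tp tq tr"
  show "\<exists>k. ?g \<bullet> p + k = tp \<and> ?g \<bullet> q + k = tq \<and> ?g \<bullet> r + k = tr"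
    using cramer_grad_inner[OF D, of tp tq tr]
    by (intro exI[of _ "tp - ?g \<bullet> p"]) (auto simp: inner_diff_right)
next
  fix g assume "\<exists>k. g \<bullet> p + k = tp \<and> g \<bullet> q + k = tq \<and> g \<bullet> r + k = tr"
  then have "g \<bullet> (q - p) = tq - tp" "g \<bullet> (r - p) = tr - tp"
    by (auto simp: inner_diff_right)
  then have Dg: "area2 p q r *\<^sub>R g = (tr - tp) *\<^sub>R rot (q - p) - (tq - tp) *\<^sub>R rot (r - p)"
    using cramer2[of "q - p" "r - p" g] by (simp add: area2_def)
  show "g = cramer_grad p q r tp tq tr"
    using D by (simp add: cramer_grad_def flip: Dg)
qed

lemma tri_aff_vertices:
  assumes "area2 a b c \<noteq> 0"
  shows "tri_aff a b c ta tb tc a = ta" "tri_aff a b c ta tb tc b = tb"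
    "tri_aff a b c ta tb tc c = tc"
  using cramer_grad_inner[OF assms, of ta tb tc]
  by (simp_all add: tri_aff_def tri_grad_eq_cramer[OF assms] inner_diff_right algebra_simps)

lemma tri_grad_swap: "tri_grad p r q tp tr tq = tri_grad p q r tp tq tr"
  unfolding tri_grad_def by (simp add: conj_ac)

(* As a function of the apex value t the gradient is affine: a fixed vector
   plus (t - tq) times the gradient of the hat function at p, which is
   perpendicular to qr and has length 1 / dist(p, qr). *)
lemma cramer_grad_apex:
  assumes "area2 p q r \<noteq> 0"
  shows "cramer_grad p q r t tq tr =
    ((t - tq) / area2 p q r) *\<^sub>R rot (r - q) + ((tr - tq) / area2 p q r) *\<^sub>R rot (q - p)"
  using assms by (simp add: cramer_grad_def vec_eq_iff forall_2 field_simps)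

(* The distance of x to the line yz is at most its height |area|/|yz|
   (in fact equal, witnessed by the orthogonal projection). *)
lemma infdist_line_le:
  fixes x y z :: "real^2"
  assumes "y \<noteq> z"
  shows "infdist x (affine hull {y, z}) \<le> \<bar>area2 x y z\<bar> / norm (z - y)"
proof -
  define a b where "a = x - y" and "b = z - y"
  define n where "n = (norm b)\<^sup>2"
  have "n > 0" using assms by (simp add: n_def b_def)
  define w where "w = y + ((a \<bullet> b) / n) *\<^sub>R b"
  have "x - w = a - ((a \<bullet> b) / n) *\<^sub>R b" by (simp add: w_def a_def)
  then have "n *\<^sub>R (x - w) = n *\<^sub>R a - (n * ((a \<bullet> b) / n)) *\<^sub>R b"
    by (simp add: scaleR_diff_right)
  also have "n * ((a \<bullet> b) / n) = a \<bullet> b" using \<open>n > 0\<close> by simp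
  also have "n *\<^sub>R a - (a \<bullet> b) *\<^sub>R b = cross2 b a *\<^sub>R rot b"
    using orth_decomp2[of b a] by (simp add: n_def)
  finally have scaled: "n *\<^sub>R (x - w) = cross2 b a *\<^sub>R rot b" .
  have "x - w = (cross2 b a / n) *\<^sub>R rot b"
    using arg_cong[OF scaled, of "scaleR (1 / n)"] \<open>n > 0\<close> by simp
  then have dist_w: "dist x w = \<bar>cross2 b a\<bar> / norm b"
    using \<open>n > 0\<close> by (simp add: dist_norm n_def power2_eq_square)
  have "w \<in> affine hull {y, z}"
    unfolding affine_hull_2_alt w_def b_def by auto
  then have "infdist x (affine hull {y, z}) \<le> dist x w" by (rule infdist_le)
  also have "\<dots> = \<bar>cross2 b a\<bar> / norm b" by (rule dist_w)
  also have "\<bar>cross2 b a\<bar> = \<bar>area2 x y z\<bar>"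
    by (simp add: a_def b_def area2_def cross2_def algebra_simps)
  finally show ?thesis by (simp add: b_def)
qed

(* Norm balls are convex: along a line the norm stays below sigma between two
   points where it is below sigma. *)
lemma norm_affine_between:
  fixes G V :: "'a::real_normed_vector"
  assumes "s \<le> t" "t \<le> u" "norm (s *\<^sub>R G + V) < \<sigma>" "norm (u *\<^sub>R G + V) < \<sigma>"
  shows "norm (t *\<^sub>R G + V) < \<sigma>"
proof (cases "s = u")
  case True
  then show ?thesis using assms by simp
next
  case False
  define l where "l = (t - s) / (u - s)"
  have "0 \<le> l" "l \<le> 1" using assms False by (auto simp: l_def field_simps)
  have "l * (u - s) = t - s" using False by (simp add: l_def)
  moreover have "(1 - l) * s + l * u = s + l * (u - s)" by (simp add: algebra_simps)
  ultimately have t_eq: "t = (1 - l) * s + l * u" by simp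
  have "t *\<^sub>R G + V = (1 - l) *\<^sub>R (s *\<^sub>R G + V) + l *\<^sub>R (u *\<^sub>R G + V)"
    by (subst t_eq) (simp add: algebra_simps)
  also have "\<dots> \<in> ball 0 \<sigma>"
    using assms \<open>0 \<le> l\<close> \<open>l \<le> 1\<close> by (intro convexD[OF convex_ball]) auto
  finally show ?thesis by simp
qed

(* Write the gradient as V + (t - tq) G with |G| = 1/h,
   h = dist(p, qr).  The hypothesis on tr - tq says |V| <= (1 - eps) sigma;
   at t = tq + eps sigma h the gradient has norm < eps sigma + |V| <= sigma
   (strictly, since G and V are not parallel), and at t = tp it has norm
   < sigma by assumption.  Raising tp by delta stays between these values. *)
lemma apex_raise:
  assumes D: "area2 p q r \<noteq> 0" and "0 < eps" "eps < 1" "0 < \<sigma>" and "tp \<le> tq"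
    and base: "\<bar>tr - tq\<bar> \<le> (1 - eps) * \<sigma> * \<bar>area2 p q r\<bar> / norm (p - q)"
    and grad: "norm (tri_grad p q r tp tq tr) < \<sigma>"
    and "0 \<le> \<delta>" and raise: "\<delta> \<le> eps * \<sigma> * (\<bar>area2 p q r\<bar> / norm (r - q))"
  shows "norm (tri_grad p q r (tp + \<delta>) tq tr) < \<sigma>"
proof -
  define G V where "G = (1 / area2 p q r) *\<^sub>R rot (r - q)"
    and "V = ((tr - tq) / area2 p q r) *\<^sub>R rot (q - p)"
  have grad_t: "tri_grad p q r t tq tr = (t - tq) *\<^sub>R G + V" for t
    using cramer_grad_apex[OF D] by (simp add: tri_grad_eq_cramer[OF D] G_def V_def)
  have "p \<noteq> q" "q \<noteq> r" using D by (auto simp: area2_def cross2_def)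
  define h where "h = \<bar>area2 p q r\<bar> / norm (r - q)"
  have "h > 0" using D \<open>q \<noteq> r\<close> by (simp add: h_def)
  define c where "c = eps * \<sigma> * h"
  have "c > 0" using assms \<open>h > 0\<close> by (simp add: c_def)
  have "norm G = 1 / h" by (simp add: G_def h_def norm_minus_commute)
  then have norm_cG: "norm (c *\<^sub>R G) = eps * \<sigma>"
    using \<open>c > 0\<close> \<open>h > 0\<close> by (simp add: c_def)
  have norm_V: "norm V \<le> (1 - eps) * \<sigma>"
  proof -
    have "norm V = \<bar>tr - tq\<bar> * (norm (p - q) / \<bar>area2 p q r\<bar>)"
      by (simp add: V_def norm_minus_commute)
    also have "\<dots> \<le> (1 - eps) * \<sigma> * \<bar>area2 p q r\<bar> / norm (p - q) * (norm (p - q) / \<bar>area2 p q r\<bar>)"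
      using base by (intro mult_right_mono) auto
    also have "\<dots> = (1 - eps) * \<sigma>" using D \<open>p \<noteq> q\<close> by simp
    finally show ?thesis .
  qed
  have far: "norm (c *\<^sub>R G + V) < \<sigma>"
  proof (cases "tr = tq")
    case True
    then show ?thesis using norm_cG assms by (simp add: V_def)
  next
    case False
    have "cross2 (r - q) (q - p) = - area2 p q r"
      by (simp add: area2_def cross2_def algebra_simps)
    then have "cross2 (c *\<^sub>R G) V \<noteq> 0"
      using D False \<open>c > 0\<close> by (simp add: G_def V_def cross2_scaleR cross2_rot)
    then have "norm (c *\<^sub>R G + V) < norm (c *\<^sub>R G) + norm V" by (rule norm_add_strict)
    then show ?thesis using norm_cG norm_V by (simp add: algebra_simps)
  qed
  have "norm ((tp + \<delta> - tq) *\<^sub>R G + V) < \<sigma>"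
  proof (rule norm_affine_between[of "tp - tq" _ c])
    show "tp - tq \<le> tp + \<delta> - tq" "tp + \<delta> - tq \<le> c"
      using assms by (auto simp: c_def h_def)
    show "norm ((tp - tq) *\<^sub>R G + V) < \<sigma>" using grad grad_t by simp
  qed (rule far)
  then show ?thesis by (simp add: grad_t)
qed

lemma apex_raise_either_base:
  fixes \<tau> :: "real^2 \<Rightarrow> real"
  assumes "\<not> collinear {p, q, r}" "0 < eps" "eps < 1" "0 < \<sigma>"
    and base: "(u = q \<and> w = r) \<or> (u = r \<and> w = q)" and "\<tau> p \<le> \<tau> u"
    and "\<bar>\<tau> w - \<tau> u\<bar> \<le> (1 - eps) * \<sigma> * \<bar>area2 p q r\<bar> / norm (p - u)"
    and "norm (tri_grad p q r (\<tau> p) (\<tau> q) (\<tau> r)) < \<sigma>"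
    and "0 \<le> \<delta>" "\<delta> \<le> eps * \<sigma> * infdist p (affine hull {q, r})"
  shows "norm (tri_grad p q r (\<tau> p + \<delta>) (\<tau> q) (\<tau> r)) < \<sigma>"
proof -
  have grad_uw: "tri_grad p u w t (\<tau> u) (\<tau> w) = tri_grad p q r t (\<tau> q) (\<tau> r)" for t
    using base tri_grad_swap[of p r q t "\<tau> r" "\<tau> q"] by (elim disjE) simp_all
  have base_set: "{u, w} = {q, r}" using base by auto
  have area_uw: "\<bar>area2 p u w\<bar> = \<bar>area2 p q r\<bar>"
    using base area2_perms(1)[of p q r] by (elim disjE) simp_all
  have D: "area2 p u w \<noteq> 0"
    using assms(1) base_set area2_neq_0[of p u w] by simp
  then have "u \<noteq> w" by (auto simp: area2_def)
  have "infdist p (affine hull {q, r}) \<le> \<bar>area2 p u w\<bar> / norm (w - u)"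
    using infdist_line_le[OF \<open>u \<noteq> w\<close>] base_set by simp
  then have "eps * \<sigma> * infdist p (affine hull {q, r}) \<le> eps * \<sigma> * (\<bar>area2 p u w\<bar> / norm (w - u))"
    using assms(2,4) by (intro mult_left_mono) auto
  then have "\<delta> \<le> eps * \<sigma> * (\<bar>area2 p u w\<bar> / norm (w - u))"
    using assms(10) by linarith
  then have "norm (tri_grad p u w (\<tau> p + \<delta>) (\<tau> u) (\<tau> w)) < \<sigma>"
    using assms area_uw grad_uw by (intro apex_raise[OF D]) auto
  then show ?thesis using grad_uw by simp
qed

lemma lowest_vertex_edge_bound:
  fixes \<tau> :: "'a::real_normed_vector \<Rightarrow> real"
  assumes "{a, b, c} = {p, q, r}" "a \<noteq> b" "a \<noteq> c" "b \<noteq> c"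
    and "\<tau> p \<le> \<tau> q" "\<tau> p \<le> \<tau> r"
    and ab: "\<bar>\<tau> a - \<tau> b\<bar> \<le> K / norm (a - c)"
    and ac: "\<bar>\<tau> a - \<tau> c\<bar> \<le> K / norm (a - b)"
  shows "\<exists>u w. ((u = q \<and> w = r) \<or> (u = r \<and> w = q)) \<and> \<tau> p \<le> \<tau> u \<and>
           \<bar>\<tau> w - \<tau> u\<bar> \<le> K / norm (p - u)"
proof -
  have "p \<in> {a, b, c}" using assms(1) by blast
  have mem: "a \<in> {p, q, r}" "b \<in> {p, q, r}" "c \<in> {p, q, r}" using assms(1) by blast+
  consider "p = a" | "p = b" | "p = c" using \<open>p \<in> {a, b, c}\<close> by blast
  then show ?thesis
  proof cases
    case 1
    then have bc: "(b = q \<and> c = r) \<or> (b = r \<and> c = q)" using mem assms(2-4) by auto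
    show ?thesis
    proof (cases "\<tau> b \<le> \<tau> c")
      case True
      then have "\<bar>\<tau> c - \<tau> b\<bar> \<le> K / norm (p - b)" using ac bc 1 assms(5,6) by auto
      then show ?thesis using bc assms(5,6) by blast
    next
      case False
      then have "\<bar>\<tau> b - \<tau> c\<bar> \<le> K / norm (p - c)" using ab bc 1 assms(5,6) by auto
      then show ?thesis using bc assms(5,6) by blast
    qed
  next
    case 2
    then have "(a = q \<and> c = r) \<or> (a = r \<and> c = q)" using mem assms(2-4) by auto
    moreover have "\<bar>\<tau> c - \<tau> a\<bar> \<le> K / norm (p - a)"
      using ac 2 by (simp add: abs_minus_commute norm_minus_commute)
    ultimately show ?thesis using assms(5,6) by blast
  next
    case 3
    then have "(a = q \<and> b = r) \<or> (a = r \<and> b = q)" using mem assms(2-4) by auto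
    moreover have "\<bar>\<tau> b - \<tau> a\<bar> \<le> K / norm (p - a)"
      using ab 3 by (simp add: abs_minus_commute norm_minus_commute)
    ultimately show ?thesis using assms(5,6) by blast
  qed
qed

lemma dw_le_height:
  assumes "eps \<le> 1" "b \<noteq> c"
  shows "dw eps f a b c \<le> (1 - eps) * (\<bar>area2 a b c\<bar> / norm (c - b))"
proof -
  have "dw eps f a b c \<le> (1 - eps) * infdist a (affine hull {b, c})" by (simp add: dw_def)
  also have "\<dots> \<le> (1 - eps) * (\<bar>area2 a b c\<bar> / norm (c - b))"
    using assms infdist_line_le[of b c a] by (intro mult_left_mono) auto
  finally show ?thesis .
qed

lemma progress_edge_bounds:
  fixes \<tau> :: "real^2 \<Rightarrow> real"
  assumes D: "area2 a b c \<noteq> 0" and "eps \<le> 1" "0 \<le> \<sigma>"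
    and "adaptive_progress eps f \<sigma> a b c (tri_aff a b c (\<tau> a) (\<tau> b) (\<tau> c))"
  shows "\<bar>\<tau> a - \<tau> b\<bar> \<le> (1 - eps) * \<sigma> * \<bar>area2 a b c\<bar> / norm (a - c)"
    and "\<bar>\<tau> a - \<tau> c\<bar> \<le> (1 - eps) * \<sigma> * \<bar>area2 a b c\<bar> / norm (a - b)"
proof -
  define d where "d = midpoint b c"
  have "a \<noteq> b" "a \<noteq> c" using D by (auto simp: area2_def)
  have constr: "\<bar>\<tau> a - \<tau> b\<bar> \<le> 2 * dw eps f d c a * \<sigma>"
    "\<bar>\<tau> a - \<tau> c\<bar> \<le> 2 * dw eps f d a b * \<sigma>"
    using assms(4) by (simp_all add: adaptive_progress_def Let_def tri_aff_vertices[OF D] d_def)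
  have "2 * dw eps f d c a * \<sigma> \<le> 2 * ((1 - eps) * (\<bar>area2 d c a\<bar> / norm (a - c))) * \<sigma>"
    using dw_le_height[of eps c a f d] assms \<open>a \<noteq> c\<close> by (intro mult_right_mono) auto
  then show "\<bar>\<tau> a - \<tau> b\<bar> \<le> (1 - eps) * \<sigma> * \<bar>area2 a b c\<bar> / norm (a - c)"
    using constr(1) by (simp add: d_def area2_midpoint mult_ac)
  have "2 * dw eps f d a b * \<sigma> \<le> 2 * ((1 - eps) * (\<bar>area2 d a b\<bar> / norm (b - a))) * \<sigma>"
    using dw_le_height[of eps a b f d] assms \<open>a \<noteq> b\<close> by (intro mult_right_mono) auto
  then show "\<bar>\<tau> a - \<tau> c\<bar> \<le> (1 - eps) * \<sigma> * \<bar>area2 a b c\<bar> / norm (a - b)"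
    using constr(2) by (simp add: d_def area2_midpoint norm_minus_commute mult_ac)
qed

lemma vertex_relabelling:
  assumes set: "{a, b, c} = {p, q, r}" and "\<not> collinear {p, q, r}"
  shows "a \<noteq> b" "a \<noteq> c" "b \<noteq> c" "\<bar>area2 a b c\<bar> = \<bar>area2 p q r\<bar>"
proof -
  have "\<not> collinear {a, b, c}" using assms by simp
  then show "a \<noteq> b" "a \<noteq> c" "b \<noteq> c" by (auto simp: collinear_2 insert_commute)
  have "a \<in> {p, q, r}" "b \<in> {p, q, r}" "c \<in> {p, q, r}" using set by blast+
  then have "(a = p \<and> b = q \<and> c = r) \<or> (a = p \<and> b = r \<and> c = q) \<or> (a = q \<and> b = p \<and> c = r) \<or>
             (a = q \<and> b = r \<and> c = p) \<or> (a = r \<and> b = p \<and> c = q) \<or> (a = r \<and> b = q \<and> c = p)"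
    using \<open>a \<noteq> b\<close> \<open>a \<noteq> c\<close> \<open>b \<noteq> c\<close> by blast
  then show "\<bar>area2 a b c\<bar> = \<bar>area2 p q r\<bar>"
    using area2_perms[of p q r] by auto
qed

theorem mainTheorem7:
  fixes eps f \<sigma> :: real
    and p q r a b c :: "real^2"
    and \<tau> :: "real^2 \<Rightarrow> real"
  assumes "0 < eps" "eps < f" "f < (1 + eps) / 2" "(1 + eps) / 2 < 1" "0 < \<sigma>"
    and "\<not> collinear {p, q, r}"
    and "{a, b, c} = {p, q, r}"
    and "\<tau> p \<le> \<tau> q" "\<tau> q \<le> \<tau> r"
    and "norm (tri_grad p q r (\<tau> p) (\<tau> q) (\<tau> r)) < \<sigma>"
    and "adaptive_progress eps f \<sigma> a b c (tri_aff a b c (\<tau> a) (\<tau> b) (\<tau> c))"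
  shows "\<forall>\<delta>. 0 \<le> \<delta> \<and> \<delta> \<le> eps * \<sigma> * infdist p (affine hull {q, r}) \<longrightarrow>
           norm (tri_grad p q r (\<tau> p + \<delta>) (\<tau> q) (\<tau> r)) < \<sigma>"
proof (intro allI impI)
  fix \<delta> assume \<delta>: "0 \<le> \<delta> \<and> \<delta> \<le> eps * \<sigma> * infdist p (affine hull {q, r})"
  have "eps < 1" using assms(1-4) by linarith
  have D: "area2 a b c \<noteq> 0" using assms(6,7) area2_neq_0 by metis
  note relabel = vertex_relabelling[OF assms(7,6)]
  let ?K = "(1 - eps) * \<sigma> * \<bar>area2 p q r\<bar>"
  have "\<bar>\<tau> a - \<tau> b\<bar> \<le> ?K / norm (a - c)" "\<bar>\<tau> a - \<tau> c\<bar> \<le> ?K / norm (a - b)"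
    using progress_edge_bounds[OF D _ _ assms(11)] relabel(4) assms(5) \<open>eps < 1\<close> by auto
  then obtain u w where "(u = q \<and> w = r) \<or> (u = r \<and> w = q)" "\<tau> p \<le> \<tau> u"
      "\<bar>\<tau> w - \<tau> u\<bar> \<le> ?K / norm (p - u)"
    using lowest_vertex_edge_bound[OF assms(7) relabel(1-3), of \<tau> ?K] assms(8,9) by auto
  then show "norm (tri_grad p q r (\<tau> p + \<delta>) (\<tau> q) (\<tau> r)) < \<sigma>"
    using apex_raise_either_base[OF assms(6,1) \<open>eps < 1\<close> assms(5)] assms(10) \<delta> by blast
qed

end
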